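(* Let $a,b\in\mathbb{C}$ with $\Re(b)>0$, $\Re(b+a)>0$, $\Re(b-a)>0$, $\frac32\pm\frac{a}{2b}\notin\mathbb{Z}_0^-$ and $\frac ab\notin\{\pm1,\pm3,\pm5,\dots\}$. Then $$ {}_4F_3\!\left(\begin{matrix}2,\ 2,\ \frac12+\frac{a}{2b},\ \frac12-\frac{a}{2b}\\ 1,\ \frac52+\frac{a}{2b},\ \frac52-\frac{a}{2b}\end{matrix};\,1\right) =\frac{9b^2-a^2}{8b^2}\;{}_3F_2\!\left(\begin{matrix}1,\ \frac12-\frac{a}{2b},\ \frac12+\frac{a}{2b}\\ \frac32-\frac{a}{2b},\ \frac32+\frac{a}{2b}\end{matrix};\,1\right). $$
   Context: $\mathbb{Z}_0^-=\{0,-1,-2,\dots\}$. The Pochhammer symbol is $(\lambda)_0=1$, $(\lambda)_n=\lambda(\lambda+1)\cdots(\lambda+n-1)$ for $n\ge1$. The generalized hypergeometric series is ${}_pF_q\!\left(\begin{matrix}\alpha_1,\dots,\alpha_p\\ \beta_1,\dots,\beta_q\end{matrix};z\right)=\sum_{n=0}^\infty\frac{(\alpha_1)_n\cdots(\alpha_p)_n}{(\beta_1)_n\cdots(\beta_q)_n}\frac{z^n}{n!}$ (with no $\beta_j\in\mathbb{Z}_0^-$). *)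

theory Defs
  imports "HOL-Analysis.Analysis"
begin

definition nonpos_ints_c :: "complex set" where
  "nonpos_ints_c = {z. \<exists>n::nat. z = - of_nat n}"

definition hypergeo :: "complex list \<Rightarrow> complex list \<Rightarrow> complex \<Rightarrow> complex" where
  "hypergeo as bs z = (\<Sum>n. (prod_list (map (\<lambda>a. pochhammer a n) as)
        / prod_list (map (\<lambda>b. pochhammer b n) bs)) * z ^ n / fact n)"

end

theory Submission
  imports Defs
begin

text \<open>
  Put \<open>p = 1/2 + a/(2b)\<close> and \<open>q = 1 - p\<close>, and let \<open>D n = (p + n) (q + n)\<close>. The \<open>n\<close>-th
  term of the 4F3 series is \<open>(n + 1)\<^sup>2 P / (D n D (n + 1))\<close> with
  \<open>P = p (p + 1) q (q + 1)\<close>. Because \<open>D (n + 1) - D n = 2 (n + 1)\<close>, partial fractions split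
  it into \<open>(p + 1) (q + 1) / 2\<close> times the \<open>n\<close>-th term \<open>p q / D n\<close> of the 3F2 series plus
  the telescoping difference \<open>P/2 (n / D n - (n + 1) / D (n + 1))\<close>, whose sum is \<open>0\<close> since
  \<open>n / D n \<rightarrow> 0\<close>.
\<close>

lemma pochhammer_ratio_plus_1:
  fixes z :: "'a :: field_char_0"
  assumes "z \<notin> \<int>\<^sub>\<le>\<^sub>0"
  shows "pochhammer z n / pochhammer (z + 1) n = z / (z + of_nat n)"
proof -
  have "z + of_nat n \<noteq> 0"
    using assms plus_of_nat_eq_0_imp by blast
  moreover have "pochhammer (z + 1) n \<noteq> 0"
    using assms pochhammer_eq_0_imp_nonpos_Int[of z "Suc n"] by (auto simp: pochhammer_rec)
  moreover have "pochhammer z n * (z + of_nat n) = z * pochhammer (z + 1) n"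
    by (metis pochhammer_Suc pochhammer_rec)
  ultimately show ?thesis by (simp add: divide_simps mult.commute)
qed

lemma pochhammer_ratio_plus_2:
  fixes z :: "'a :: field_char_0"
  assumes "z \<notin> \<int>\<^sub>\<le>\<^sub>0"
  shows "pochhammer z n / pochhammer (z + 2) n
       = z * (z + 1) / ((z + of_nat n) * (z + 1 + of_nat n))"
proof -
  have "z + 1 \<notin> \<int>\<^sub>\<le>\<^sub>0"
    using assms nonpos_Ints_diff_Nats[of "z + 1" 1] by auto
  moreover have "pochhammer (z + 1) n \<noteq> 0"
    using assms pochhammer_eq_0_imp_nonpos_Int[of z "Suc n"] by (auto simp: pochhammer_rec)
  ultimately have "pochhammer z n / pochhammer (z + 2) n
      = (pochhammer z n / pochhammer (z + 1) n) * (pochhammer (z + 1) n / pochhammer (z + 1 + 1) n)"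
    by (simp add: add.assoc)
  also have "\<dots> = z / (z + of_nat n) * ((z + 1) / (z + 1 + of_nat n))"
    using pochhammer_ratio_plus_1[OF assms] pochhammer_ratio_plus_1[OF \<open>z + 1 \<notin> \<int>\<^sub>\<le>\<^sub>0\<close>]
    by simp
  finally show ?thesis by simp
qed

lemma pochhammer_two: "pochhammer (2 :: 'a :: {comm_semiring_1, semiring_char_0}) n = (of_nat n + 1) * fact n"
proof -
  have "pochhammer 2 n = pochhammer (1 :: 'a) (Suc n)"
    by (simp add: pochhammer_rec)
  also have "\<dots> = (of_nat n + 1) * fact n"
    by (simp add: pochhammer_fact[symmetric] algebra_simps)
  finally show ?thesis .
qed

lemma hypergeo_3F2_eq_suminf:
  fixes p q :: complex
  assumes "p \<notin> \<int>\<^sub>\<le>\<^sub>0" "q \<notin> \<int>\<^sub>\<le>\<^sub>0"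
  shows "hypergeo [1, q, p] [q + 1, p + 1] 1 = (\<Sum>n. p * q / ((p + of_nat n) * (q + of_nat n)))"
  unfolding hypergeo_def
proof (rule arg_cong[where f = suminf], rule ext)
  fix n
  have "prod_list (map (\<lambda>a. pochhammer a n) [1, q, p]) / prod_list (map (\<lambda>b. pochhammer b n) [q + 1, p + 1])
          * 1 ^ n / fact n
      = (pochhammer p n / pochhammer (p + 1) n) * (pochhammer q n / pochhammer (q + 1) n)"
    by (simp add: pochhammer_fact[symmetric] mult_ac)
  also have "\<dots> = p * q / ((p + of_nat n) * (q + of_nat n))"
    unfolding pochhammer_ratio_plus_1[OF assms(1)] pochhammer_ratio_plus_1[OF assms(2)] by simp
  finally show "prod_list (map (\<lambda>a. pochhammer a n) [1, q, p]) / prod_list (map (\<lambda>b. pochhammer b n) [q + 1, p + 1])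
          * 1 ^ n / fact n = p * q / ((p + of_nat n) * (q + of_nat n))" .
qed

lemma hypergeo_4F3_eq_suminf:
  fixes p q :: complex
  assumes "p \<notin> \<int>\<^sub>\<le>\<^sub>0" "q \<notin> \<int>\<^sub>\<le>\<^sub>0"
  shows "hypergeo [2, 2, p, q] [1, p + 2, q + 2] 1
       = (\<Sum>n. (of_nat n + 1)^2 * (p * (p + 1) * q * (q + 1))
               / ((p + of_nat n) * (q + of_nat n) * ((p + of_nat (Suc n)) * (q + of_nat (Suc n)))))"
  unfolding hypergeo_def
proof (rule arg_cong[where f = suminf], rule ext)
  fix n
  have "prod_list (map (\<lambda>a. pochhammer a n) [2, 2, p, q]) / prod_list (map (\<lambda>b. pochhammer b n) [1, p + 2, q + 2])
          * 1 ^ n / fact n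
      = (of_nat n + 1)^2 * (pochhammer p n / pochhammer (p + 2) n) * (pochhammer q n / pochhammer (q + 2) n)"
    by (simp add: pochhammer_fact[symmetric] pochhammer_two power2_eq_square)
  also have "\<dots> = (of_nat n + 1)^2 * (p * (p + 1) * q * (q + 1))
               / ((p + of_nat n) * (q + of_nat n) * ((p + of_nat (Suc n)) * (q + of_nat (Suc n))))"
    unfolding pochhammer_ratio_plus_2[OF assms(1)] pochhammer_ratio_plus_2[OF assms(2)]
    by (simp add: mult_ac add_ac)
  finally show "prod_list (map (\<lambda>a. pochhammer a n) [2, 2, p, q]) / prod_list (map (\<lambda>b. pochhammer b n) [1, p + 2, q + 2])
          * 1 ^ n / fact n = \<dots>" .
qed

lemma shifted_product_partial_fractions:
  fixes p q :: "'a :: field_char_0"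
  defines "D \<equiv> \<lambda>n. (p + of_nat n) * (q + of_nat n)" and "P \<equiv> p * (p + 1) * q * (q + 1)"
  assumes "p + q = 1" "D n \<noteq> 0" "D (Suc n) \<noteq> 0"
  shows "(of_nat n + 1)^2 * P / (D n * D (Suc n))
       = (p + 1) * (q + 1) / 2 * (p * q / D n) + P / 2 * (of_nat n / D n - of_nat (Suc n) / D (Suc n))"
proof -
  have "D (Suc n) - D n = 2 * (of_nat n + 1)"
    using assms(3) unfolding D_def by (simp add: algebra_simps)
  have "(of_nat n + 1)^2 * P / (D n * D (Suc n))
      = P / 2 * ((of_nat n + 1) * (2 * (of_nat n + 1)) / (D n * D (Suc n)))"
    using assms(4,5) by (simp add: power2_eq_square field_simps)
  also have "\<dots> = P / 2 * ((of_nat n + 1) * (D (Suc n) - D n) / (D n * D (Suc n)))"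
    unfolding \<open>D (Suc n) - D n = 2 * (of_nat n + 1)\<close> ..
  also have "\<dots> = P / 2 * ((of_nat n + 1) / D n - of_nat (Suc n) / D (Suc n))"
    using assms(4,5) by (simp add: diff_frac_eq algebra_simps)
  also have "\<dots> = (p + 1) * (q + 1) / 2 * (p * q / D n) + P / 2 * (of_nat n / D n - of_nat (Suc n) / D (Suc n))"
    using assms(4,5) unfolding P_def by (simp add: field_simps)
  finally show ?thesis .
qed

lemma eventually_norm_shifted_product_ge:
  fixes p q :: complex
  assumes "p + q = 1"
  shows "eventually (\<lambda>n. real n ^ 2 \<le> norm ((p + of_nat n) * (q + of_nat n))) sequentially"
  using eventually_ge_at_top[of "nat \<lceil>norm (p * q)\<rceil>"]
proof eventually_elim
  case (elim n)
  have "real (n * n + n) - norm (p * q) = norm (of_nat (n * n + n) :: complex) - norm (p * q)"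
    by (simp only: norm_of_nat)
  also have "\<dots> \<le> norm (of_nat (n * n + n) + p * q)"
    by (rule norm_diff_ineq)
  also have "of_nat (n * n + n) + p * q = p * q + (p + q) * of_nat n + of_nat n * of_nat n"
    using assms by simp
  also have "\<dots> = (p + of_nat n) * (q + of_nat n)"
    by (simp add: algebra_simps)
  finally have "real (n * n + n) - norm (p * q) \<le> norm ((p + of_nat n) * (q + of_nat n))" .
  moreover have "norm (p * q) \<le> real n"
    using elim by linarith
  ultimately show ?case by (simp add: power2_eq_square)
qed

lemma summable_divide_shifted_product:
  fixes p q c :: complex
  assumes "p + q = 1"
  shows "summable (\<lambda>n. c / ((p + of_nat n) * (q + of_nat n)))"
proof (rule summable_comparison_test_ev)
  show "summable (\<lambda>n. norm c * inverse (real n ^ 2))"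
    by (intro summable_mult inverse_power_summable) simp
  show "eventually (\<lambda>n. norm (c / ((p + of_nat n) * (q + of_nat n))) \<le> norm c * inverse (real n ^ 2)) sequentially"
    using eventually_norm_shifted_product_ge[OF assms] eventually_gt_at_top[of 0]
  proof eventually_elim
    case (elim n)
    then have "0 < real n ^ 2" by simp
    with elim have "norm c / norm ((p + of_nat n) * (q + of_nat n)) \<le> norm c / real n ^ 2"
      by (intro divide_left_mono mult_pos_pos) auto
    then show ?case by (simp only: norm_divide) (simp only: divide_inverse)
  qed
qed

lemma tendsto_of_nat_divide_shifted_product:
  fixes p q :: complex
  assumes "p + q = 1"
  shows "(\<lambda>n. of_nat n / ((p + of_nat n) * (q + of_nat n))) \<longlonglongrightarrow> 0"
proof (rule Lim_null_comparison)
  show "eventually (\<lambda>n. norm (of_nat n / ((p + of_nat n) * (q + of_nat n))) \<le> 1 / real n) sequentially"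
    using eventually_norm_shifted_product_ge[OF assms] eventually_gt_at_top[of 0]
  proof eventually_elim
    case (elim n)
    then have "0 < real n ^ 2" by simp
    with elim have "real n / norm ((p + of_nat n) * (q + of_nat n)) \<le> real n / real n ^ 2"
      by (intro divide_left_mono mult_pos_pos) auto
    with \<open>0 < n\<close> show ?case by (simp add: norm_divide power2_eq_square)
  qed
  show "(\<lambda>n. 1 / real n) \<longlonglongrightarrow> 0"
    by (rule lim_inverse_n')
qed

lemma hypergeo_4F3_eq_3F2:
  fixes p q :: complex
  assumes "p + q = 1" "p \<notin> \<int>\<^sub>\<le>\<^sub>0" "q \<notin> \<int>\<^sub>\<le>\<^sub>0"
  shows "hypergeo [2, 2, p, q] [1, p + 2, q + 2] 1 = (p + 1) * (q + 1) / 2 * hypergeo [1, q, p] [q + 1, p + 1] 1"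
proof -
  define D where "D = (\<lambda>n. (p + of_nat n) * (q + of_nat n))"
  define P where "P = p * (p + 1) * q * (q + 1)"
  define K where "K = (p + 1) * (q + 1) / 2"
  have "D n \<noteq> 0" for n
    using assms(2,3) plus_of_nat_eq_0_imp unfolding D_def by fastforce
  then have split: "(of_nat n + 1)^2 * P / (D n * D (Suc n))
      = K * (p * q / D n) + P / 2 * (of_nat n / D n - of_nat (Suc n) / D (Suc n))" for n
    using shifted_product_partial_fractions[OF assms(1)] unfolding D_def P_def K_def by blast
  have "(\<lambda>n. p * q / D n) sums hypergeo [1, q, p] [q + 1, p + 1] 1"
    unfolding hypergeo_3F2_eq_suminf[OF assms(2,3)] D_def
    using summable_divide_shifted_product[OF assms(1)] by (rule summable_sums)
  moreover have "(\<lambda>n. of_nat n / D n - of_nat (Suc n) / D (Suc n)) sums (of_nat 0 / D 0 - 0)"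
    using tendsto_of_nat_divide_shifted_product[OF assms(1)] unfolding D_def by (rule telescope_sums')
  ultimately have "(\<lambda>n. K * (p * q / D n) + P / 2 * (of_nat n / D n - of_nat (Suc n) / D (Suc n)))
      sums (K * hypergeo [1, q, p] [q + 1, p + 1] 1 + P / 2 * (of_nat 0 / D 0 - 0))"
    by (intro sums_add sums_mult)
  then have "(\<lambda>n. (of_nat n + 1)^2 * P / (D n * D (Suc n))) sums (K * hypergeo [1, q, p] [q + 1, p + 1] 1)"
    unfolding split by simp
  then show ?thesis
    unfolding hypergeo_4F3_eq_suminf[OF assms(2,3)] K_def P_def D_def by (simp add: sums_iff)
qed

lemma half_plus_notin_nonpos_Ints:
  fixes c :: complex
  assumes "\<forall>k::nat. 2 * c \<noteq> - of_nat (2 * k + 1)"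
  shows "1/2 + c \<notin> \<int>\<^sub>\<le>\<^sub>0"
proof
  assume "1/2 + c \<in> \<int>\<^sub>\<le>\<^sub>0"
  then obtain k where "1/2 + c = - of_nat k"
    by (elim nonpos_Ints_cases')
  have "2 * c = 2 * (1/2 + c) - 1"
    by simp
  also have "\<dots> = - of_nat (2 * k + 1)"
    unfolding \<open>1/2 + c = - of_nat k\<close> by simp
  finally show False
    using assms by blast
qed

theorem mainTheorem11:
  fixes a b :: complex
  assumes "Re b > 0" and "Re (b + a) > 0" and "Re (b - a) > 0"
    and "3/2 + a / (2*b) \<notin> nonpos_ints_c" and "3/2 - a / (2*b) \<notin> nonpos_ints_c"
    and "\<forall>k::nat. a / b \<noteq> of_nat (2*k+1) \<and> a / b \<noteq> - of_nat (2*k+1)"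
  shows "hypergeo [2, 2, 1/2 + a/(2*b), 1/2 - a/(2*b)] [1, 5/2 + a/(2*b), 5/2 - a/(2*b)] 1
       = (9*b^2 - a^2) / (8*b^2) * hypergeo [1, 1/2 - a/(2*b), 1/2 + a/(2*b)] [3/2 - a/(2*b), 3/2 + a/(2*b)] 1"
proof -
  define c where "c = a / (2 * b)"
  have "b \<noteq> 0"
    using assms(1) by auto
  then have "a / b = 2 * c"
    unfolding c_def by (simp add: field_simps)
  then have odd: "\<forall>k::nat. 2 * c \<noteq> of_nat (2 * k + 1) \<and> 2 * c \<noteq> - of_nat (2 * k + 1)"
    using assms(6) by simp
  then have "1/2 + c \<notin> \<int>\<^sub>\<le>\<^sub>0"
    by (intro half_plus_notin_nonpos_Ints) blast
  moreover from odd have "1/2 + - c \<notin> \<int>\<^sub>\<le>\<^sub>0"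
    by (intro half_plus_notin_nonpos_Ints) (metis minus_minus mult_minus_right)
  ultimately have "hypergeo [2, 2, 1/2 + c, 1/2 - c] [1, 1/2 + c + 2, 1/2 - c + 2] 1
      = (1/2 + c + 1) * (1/2 - c + 1) / 2 * hypergeo [1, 1/2 - c, 1/2 + c] [1/2 - c + 1, 1/2 + c + 1] 1"
    by (intro hypergeo_4F3_eq_3F2) simp_all
  moreover have "(1/2 + c + 1) * (1/2 - c + 1) / 2 = (9*b^2 - a^2) / (8*b^2)"
    using \<open>b \<noteq> 0\<close> unfolding c_def by (simp add: field_simps power2_eq_square)
  moreover have "1/2 + c + 2 = 5/2 + c" "1/2 - c + 2 = 5/2 - c" "1/2 + c + 1 = 3/2 + c" "1/2 - c + 1 = 3/2 - c"
    by simp_all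
  ultimately show ?thesis
    unfolding c_def by argo
qed

end
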